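(* Let $p\neq q$ be primes, $G_1$ a finite abelian group of order $p^e$ and $G_2$ a finite abelian group of order $q^f$. Let $R_i=\mathbf{Z}[G_i]$, $S_i$ the integral closure of $R_i$ in $\mathbf{Q}[G_i]$, and $I_i$ the conductor of $S_i$ into $R_i$. Then the conductor of $S_1\otimes S_2$ into $R_1\otimes R_2\cong\mathbf{Z}[G_1\times G_2]$ is $I_1\otimes I_2$.
   Context: For a commutative ring $S$ with subring $R$, the conductor of $S$ into $R$ is $\{s\in S: sS\subseteq R\}$, the largest ideal of $S$ contained in $R$. Tensor products are over $\mathbf{Z}$; all groups involved are free abelian, so $I_1\otimes I_2\subseteq R_1\otimes R_2\subseteq S_1\otimes S_2$. *)

theory Defs
  imports Complex_Main "HOL-Library.Product_Plus" "HOL-Library.Function_Algebras" "HOL-Computational_Algebra.Primes"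
begin

text \<open>The rational group algebra Q[G] is the type G \<Rightarrow> rat (all functions,
  G finite), with convolution as multiplication.\<close>

definition gconv :: "('g::{finite,ab_group_add} \<Rightarrow> rat) \<Rightarrow> ('g \<Rightarrow> rat) \<Rightarrow> ('g \<Rightarrow> rat)" where
  "gconv f h = (\<lambda>x. \<Sum>y\<in>UNIV. f y * h (x - y))"

definition gone :: "'g::{finite,ab_group_add} \<Rightarrow> rat" where
  "gone = (\<lambda>x. if x = 0 then 1 else 0)"

primrec gpow :: "('g::{finite,ab_group_add} \<Rightarrow> rat) \<Rightarrow> nat \<Rightarrow> ('g \<Rightarrow> rat)" where
  "gpow f 0 = gone"
| "gpow f (Suc n) = gconv f (gpow f n)"

definition int_group_ring :: "('g::{finite,ab_group_add} \<Rightarrow> rat) set" where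
  "int_group_ring = {f. \<forall>x. f x \<in> \<int>}"

definition integral_over :: "('g::{finite,ab_group_add} \<Rightarrow> rat) set \<Rightarrow> ('g \<Rightarrow> rat) \<Rightarrow> bool" where
  "integral_over R x \<longleftrightarrow>
     (\<exists>n c. (\<forall>i<n. c i \<in> R) \<and> gpow x n + (\<Sum>i<n. gconv (c i) (gpow x i)) = 0)"

definition integral_closure :: "('g::{finite,ab_group_add} \<Rightarrow> rat) set \<Rightarrow> ('g \<Rightarrow> rat) set" where
  "integral_closure R = {x. integral_over R x}"

definition conductor :: "('g::{finite,ab_group_add} \<Rightarrow> rat) set \<Rightarrow> ('g \<Rightarrow> rat) set \<Rightarrow> ('g \<Rightarrow> rat) set" where
  "conductor S R = {s \<in> S. \<forall>t\<in>S. gconv s t \<in> R}"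

text \<open>Elementary tensor, via Q[G1] \<otimes> Q[G2] \<cong> Q[G1 \<times> G2].\<close>
definition gtens :: "('a \<Rightarrow> rat) \<Rightarrow> ('b \<Rightarrow> rat) \<Rightarrow> ('a \<times> 'b \<Rightarrow> rat)" where
  "gtens f h = (\<lambda>(a, b). f a * h b)"

text \<open>A \<otimes> B for additive subgroups A, B: the image of A \<otimes>_Z B in Q[G1 \<times> G2],
  i.e. the additive subgroup generated by elementary tensors (injective since all groups
  are free abelian).\<close>
definition tensor_sub :: "('a \<Rightarrow> rat) set \<Rightarrow> ('b \<Rightarrow> rat) set \<Rightarrow> ('a \<times> 'b \<Rightarrow> rat) set" where
  "tensor_sub A B = {\<Sum>i<n. (\<lambda>x. of_int (k i) * gtens (f i) (h i) x) | (n::nat) k f h.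
                        \<forall>i<n. f i \<in> A \<and> h i \<in> B}"

end

(*
  Let G be a finite abelian group of order N, S the integral closure of Z[G] and I its conductor.
  For x in S, the coefficient N x(0) is the trace of multiplication by x on Q[G]; it is rational
  and a sum of eigenvalues that are algebraic integers, hence an integer. Translating, N S lies in
  Z[G], so N^2 S lies in I.

  Now let x lie in the conductor of S1 (x) S2 into R1 (x) R2. Each slice N1 x(g,-) lies in S2, and
  even in I2, because x (1 (x) t) lies in R1 (x) R2 for t in S2. Hence
  N1^3 x = sum_g (N1^2 delta_g) (x) (N1 x(g,-)) lies in I1 (x) I2; symmetrically so does N2^3 x, and
  as N1 and N2 are coprime, so does x. The reverse inclusion holds because convolution of
  elementary tensors is computed factorwise.
*)

theory Submission
  imports Defs "Jordan_Normal_Form.Char_Poly"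
begin

section \<open>The rational group algebra\<close>

lemma gconv_comm: "gconv f h = gconv h (f::'g::{finite,ab_group_add} \<Rightarrow> rat)"
proof (rule ext)
  fix x
  have "(\<Sum>y\<in>UNIV. f y * h (x - y)) = (\<Sum>y\<in>UNIV. f (x - y) * h (x - (x - y)))"
    by (rule sum.reindex_bij_witness[where i="\<lambda>y. x - y" and j="\<lambda>y. x - y"]) auto
  then show "gconv f h x = gconv h f x" by (simp add: gconv_def mult.commute)
qed

lemma gconv_assoc: "gconv (gconv f g) h = gconv f (gconv g (h::'g::{finite,ab_group_add} \<Rightarrow> rat))"
proof (rule ext)
  fix x
  have "gconv (gconv f g) h x = (\<Sum>z\<in>UNIV. \<Sum>y\<in>UNIV. f y * g (z - y) * h (x - z))"
    by (simp add: gconv_def sum_distrib_right)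
  also have "\<dots> = (\<Sum>y\<in>UNIV. \<Sum>z\<in>UNIV. f y * g (z - y) * h (x - z))"
    by (rule sum.swap)
  also have "\<dots> = (\<Sum>y\<in>UNIV. \<Sum>z\<in>UNIV. f y * g z * h (x - y - z))"
  proof (rule sum.cong[OF refl])
    fix y
    show "(\<Sum>z\<in>UNIV. f y * g (z - y) * h (x - z)) = (\<Sum>z\<in>UNIV. f y * g z * h (x - y - z))"
      by (rule sum.reindex_bij_witness[where i="\<lambda>z. z + y" and j="\<lambda>z. z - y"])
         (auto simp: algebra_simps)
  qed
  also have "\<dots> = gconv f (gconv g h) x"
    by (simp add: gconv_def sum_distrib_left mult.assoc)
  finally show "gconv (gconv f g) h x = gconv f (gconv g h) x" .
qed

lemma gconv_add_left: "gconv (f + g) h = gconv f h + gconv g (h::'g::{finite,ab_group_add} \<Rightarrow> rat)"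
  by (rule ext) (simp add: gconv_def distrib_right sum.distrib)

lemma gconv_add_right: "gconv h (f + g) = gconv h f + gconv h (g::'g::{finite,ab_group_add} \<Rightarrow> rat)"
  by (rule ext) (simp add: gconv_def distrib_left sum.distrib)

lemma gconv_zero_left: "gconv 0 f = (0::'g::{finite,ab_group_add} \<Rightarrow> rat)"
  by (rule ext) (simp add: gconv_def)

lemma gconv_zero_right: "gconv f 0 = (0::'g::{finite,ab_group_add} \<Rightarrow> rat)"
  by (rule ext) (simp add: gconv_def)

lemma gconv_scale_left:
  "gconv (\<lambda>y. a * f y) h = (\<lambda>z. a * gconv f (h::'g::{finite,ab_group_add} \<Rightarrow> rat) z)"
  by (rule ext) (simp add: gconv_def sum_distrib_left mult.assoc)

lemma gconv_scale_right:
  "gconv f (\<lambda>y. a * h y) = (\<lambda>z. a * gconv f (h::'g::{finite,ab_group_add} \<Rightarrow> rat) z)"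
  by (rule ext) (simp add: gconv_def sum_distrib_left mult.left_commute)

lemma gconv_sum_left: "gconv (sum g I) t = (\<Sum>i\<in>I. gconv (g i) (t::'g::{finite,ab_group_add} \<Rightarrow> rat))"
proof (induction I rule: infinite_finite_induct)
  case (infinite A)
  then show ?case by (simp only: sum.infinite[OF infinite] gconv_zero_left)
next
  case (insert a A)
  then show ?case by (simp only: sum.insert[OF insert(1,2)] gconv_add_left insert(3))
qed (simp_all only: sum.empty gconv_zero_left)

lemma gconv_sum_right: "gconv t (sum g I) = (\<Sum>i\<in>I. gconv (t::'g::{finite,ab_group_add} \<Rightarrow> rat) (g i))"
proof (induction I rule: infinite_finite_induct)
  case (infinite A)
  then show ?case by (simp only: sum.infinite[OF infinite] gconv_zero_right)
next
  case (insert a A)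
  then show ?case by (simp only: sum.insert[OF insert(1,2)] gconv_add_right insert(3))
qed (simp_all only: sum.empty gconv_zero_right)

definition gdelta :: "'g \<Rightarrow> 'g \<Rightarrow> rat" where
  "gdelta h = (\<lambda>y. if y = h then 1 else 0)"

lemma gdelta_zero: "gdelta 0 = gone"
  by (simp add: gdelta_def gone_def)

lemma gconv_gdelta_left: "gconv (gdelta h) f = (\<lambda>x. f (x - h))"
proof (rule ext)
  fix x
  have "gconv (gdelta h) f x = (\<Sum>y\<in>UNIV. if y = h then f (x - y) else 0)"
    unfolding gconv_def gdelta_def by (rule sum.cong) auto
  then show "gconv (gdelta h) f x = f (x - h)" by (simp add: sum.delta)
qed

lemma gconv_gone_left: "gconv gone f = (f::'g::{finite,ab_group_add} \<Rightarrow> rat)"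
  using gconv_gdelta_left[of 0 f] by (simp add: gdelta_zero)

lemma gconv_gone_right: "gconv f gone = (f::'g::{finite,ab_group_add} \<Rightarrow> rat)"
  by (metis gconv_gone_left gconv_comm)

lemma gconv_scale_gone: "gconv (\<lambda>g. c * gone g) f = (\<lambda>y. c * (f::'g::{finite,ab_group_add} \<Rightarrow> rat) y)"
  by (simp add: gconv_scale_left gconv_gone_left)

lemma gone_neq_zero: "gone \<noteq> (0::'g::{finite,ab_group_add} \<Rightarrow> rat)"
  by (metis gone_def zero_fun_apply zero_neq_one)

lemma sum_fun_apply: "(\<Sum>h\<in>A. f h) y = (\<Sum>h\<in>A. f h y :: 'b::comm_monoid_add)"
  by (induction A rule: infinite_finite_induct) auto

lemma sum_UNIV_pair:
  "(\<Sum>y\<in>(UNIV::('a::finite \<times> 'b::finite) set). F y) = (\<Sum>y1\<in>UNIV. \<Sum>y2\<in>UNIV. F (y1, y2))"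
  by (simp add: sum.cartesian_product UNIV_Times_UNIV[symmetric] del: UNIV_Times_UNIV)

lemma gconv_gtens:
  "gconv (gtens f h) (gtens u v) =
   gtens (gconv (f::'a::{finite,ab_group_add} \<Rightarrow> rat) u) (gconv (h::'b::{finite,ab_group_add} \<Rightarrow> rat) v)"
proof (rule ext, clarify)
  fix a b
  have "gconv (gtens f h) (gtens u v) (a, b)
      = (\<Sum>y1\<in>UNIV. \<Sum>y2\<in>UNIV. (f y1 * u (a - y1)) * (h y2 * v (b - y2)))"
    by (simp add: gconv_def sum_UNIV_pair gtens_def algebra_simps)
  also have "\<dots> = gtens (gconv f u) (gconv h v) (a, b)"
    by (simp add: gtens_def gconv_def sum_product)
  finally show "gconv (gtens f h) (gtens u v) (a, b) = gtens (gconv f u) (gconv h v) (a, b)" .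
qed

lemma gconv_comp_swap:
  fixes x t :: "'a::{finite,ab_group_add} \<times> 'b::{finite,ab_group_add} \<Rightarrow> rat"
  shows "gconv (x \<circ> prod.swap) (t \<circ> prod.swap) = gconv x t \<circ> prod.swap"
proof (rule ext, clarify)
  fix b a
  have "gconv (x \<circ> prod.swap) (t \<circ> prod.swap) (b, a)
      = (\<Sum>y2\<in>UNIV. \<Sum>y1\<in>UNIV. x (y1, y2) * t (a - y1, b - y2))"
    by (simp add: gconv_def sum_UNIV_pair)
  also have "\<dots> = (\<Sum>y1\<in>UNIV. \<Sum>y2\<in>UNIV. x (y1, y2) * t (a - y1, b - y2))"
    by (rule sum.swap)
  also have "\<dots> = (gconv x t \<circ> prod.swap) (b, a)"
    by (simp add: gconv_def sum_UNIV_pair)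
  finally show "gconv (x \<circ> prod.swap) (t \<circ> prod.swap) (b, a) = (gconv x t \<circ> prod.swap) (b, a)" .
qed

text \<open>Functions \<open>'g \<Rightarrow> rat\<close> already carry the pointwise product of \<open>Function_Algebras\<close>; the copy
  \<open>'g group_alg\<close> carries convolution instead, which makes the generic theory of integrality over
  \<open>\<int>\<close> in commutative rings available for \<open>\<rat>[G]\<close>.\<close>

typedef 'g group_alg = "UNIV :: ('g \<Rightarrow> rat) set" morphisms fun_of alg_of
  by auto

setup_lifting type_definition_group_alg

instantiation group_alg :: ("{finite,ab_group_add}") comm_ring_1
begin
lift_definition zero_group_alg :: "'a group_alg" is "0" .
lift_definition one_group_alg :: "'a group_alg" is "gone" .
lift_definition plus_group_alg :: "'a group_alg \<Rightarrow> 'a group_alg \<Rightarrow> 'a group_alg" is "(+)" .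
lift_definition minus_group_alg :: "'a group_alg \<Rightarrow> 'a group_alg \<Rightarrow> 'a group_alg" is "(-)" .
lift_definition uminus_group_alg :: "'a group_alg \<Rightarrow> 'a group_alg" is "uminus" .
lift_definition times_group_alg :: "'a group_alg \<Rightarrow> 'a group_alg \<Rightarrow> 'a group_alg" is "gconv" .
instance
proof
  fix a b c :: "'a group_alg"
  show "a * b * c = a * (b * c)" by transfer (rule gconv_assoc)
  show "a * b = b * a" by transfer (rule gconv_comm)
  show "1 * a = a" by transfer (rule gconv_gone_left)
  show "(a + b) * c = a * c + b * c" by transfer (rule gconv_add_left)
  show "(0::'a group_alg) \<noteq> 1" by transfer (metis gone_neq_zero)
  show "a + b + c = a + (b + c)" by transfer (simp add: add.assoc)
  show "a + b = b + a" by transfer (simp add: add.commute)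
  show "0 + a = a" by transfer simp
  show "- a + a = 0" by transfer simp
  show "a - b = a + - b" by transfer simp
qed
end

lemma fun_of_add: "fun_of (a + b) = fun_of a + fun_of b" by transfer simp
lemma fun_of_diff: "fun_of (a - b) = fun_of a - fun_of b" by transfer simp
lemma fun_of_mult: "fun_of (a * b) = gconv (fun_of a) (fun_of b)" by transfer simp
lemma fun_of_one: "fun_of 1 = gone" by transfer simp
lemma fun_of_zero: "fun_of 0 = 0" by transfer simp

lemma fun_of_sum: "fun_of (sum f A) = (\<Sum>x\<in>A. fun_of (f x))"
  by (induction A rule: infinite_finite_induct) (auto simp: fun_of_add fun_of_zero)

lemma fun_of_power: "fun_of (x ^ n) = gpow (fun_of x) n"
  by (induction n) (auto simp: fun_of_one fun_of_mult)

lemma fun_of_of_int: "fun_of (of_int k) = (\<lambda>g. of_int k * gone g)"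
proof (induction k rule: int_induct[where k=0])
  case base then show ?case by (simp add: fun_of_zero)
next
  case (step1 i) then show ?case by (simp add: fun_of_add fun_of_one algebra_simps)
next
  case (step2 i) then show ?case by (simp add: fun_of_diff fun_of_one algebra_simps)
qed

lemma fun_of_of_int_mult: "fun_of (of_int k * X) = (\<lambda>y. of_int k * fun_of X y)"
  by (simp add: fun_of_mult fun_of_of_int gconv_scale_gone)

lemma fun_of_alg_of [simp]: "fun_of (alg_of f) = f"
  by (simp add: alg_of_inverse)

lemma alg_of_eqI: "fun_of X = f \<Longrightarrow> alg_of f = X"
  by (metis fun_of_inverse)

lemma alg_of_add: "alg_of (f + g) = alg_of f + alg_of g"
  by (rule alg_of_eqI) (simp add: fun_of_add)

lemma alg_of_gconv: "alg_of (gconv f g) = alg_of f * alg_of g"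
  by (rule alg_of_eqI) (simp add: fun_of_mult)

section \<open>Integrality over \<open>\<int>\<close> in a commutative ring\<close>

definition int_integral :: "'r::comm_ring_1 \<Rightarrow> bool" where
  "int_integral x \<longleftrightarrow> (\<exists>P::int poly. monic P \<and> poly (map_poly of_int P) x = 0)"

definition int_span :: "'r::comm_ring_1 set \<Rightarrow> 'r set" where
  "int_span W = {y. \<exists>c. y = (\<Sum>w\<in>W. of_int (c w) * w)}"

lemma int_span_base:
  assumes "finite W" "w \<in> W"
  shows "w \<in> int_span W"
proof -
  have "(\<Sum>v\<in>W. of_int (if v = w then 1 else 0) * v) = (\<Sum>v\<in>W. if v = w then v else 0)"
    by (rule sum.cong) auto
  also have "\<dots> = w" using assms by (simp add: sum.delta')
  finally show ?thesis
    unfolding int_span_def by (intro CollectI exI[of _ "\<lambda>v. if v = w then 1 else 0"]) simp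
qed

lemma int_span_zero: "0 \<in> int_span W"
  unfolding int_span_def by (auto intro!: exI[of _ "\<lambda>w. 0"])

lemma int_span_add:
  assumes "a \<in> int_span W" "b \<in> int_span W"
  shows "a + b \<in> int_span W"
proof -
  obtain c d where "a = (\<Sum>w\<in>W. of_int (c w) * w)" "b = (\<Sum>w\<in>W. of_int (d w) * w)"
    using assms by (auto simp: int_span_def)
  then show ?thesis unfolding int_span_def
    by (intro CollectI exI[of _ "\<lambda>w. c w + d w"]) (simp add: sum.distrib distrib_right)
qed

lemma int_span_scale:
  assumes "a \<in> int_span W"
  shows "of_int k * a \<in> int_span W"
proof -
  obtain c where "a = (\<Sum>w\<in>W. of_int (c w) * w)" using assms by (auto simp: int_span_def)
  then show ?thesis unfolding int_span_def
    by (intro CollectI exI[of _ "\<lambda>w. k * c w"]) (simp add: sum_distrib_left mult.assoc)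
qed

lemma int_span_sum: "(\<And>i. i \<in> I \<Longrightarrow> f i \<in> int_span W) \<Longrightarrow> sum f I \<in> int_span W"
  by (induction I rule: infinite_finite_induct) (auto intro: int_span_add int_span_zero)

lemma int_span_mult:
  assumes "\<And>w. w \<in> W \<Longrightarrow> x * w \<in> int_span W" and "a \<in> int_span W"
  shows "x * a \<in> int_span W"
proof -
  from assms(2) obtain c where a: "a = (\<Sum>w\<in>W. of_int (c w) * w)" by (auto simp: int_span_def)
  have "x * a = (\<Sum>w\<in>W. of_int (c w) * (x * w))" by (simp add: a sum_distrib_left algebra_simps)
  also have "\<dots> \<in> int_span W" by (intro int_span_sum int_span_scale assms(1))
  finally show ?thesis .
qed

lemma poly_map_of_int_const: "poly (map_poly of_int [:a:]) (x::'r::comm_ring_1) = of_int a"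
  by (cases "a = 0") (simp_all add: map_poly_pCons)

lemma det_eq_zero_if_mult_vec_eq_zero:
  fixes M :: "'a::comm_ring_1 mat"
  assumes M: "M \<in> carrier_mat n n" and v: "v \<in> carrier_vec n" "M *\<^sub>v v = 0\<^sub>v n"
    and one: "i < n" "v $ i = 1"
  shows "det M = 0"
proof -
  have "(det M \<cdot>\<^sub>m 1\<^sub>m n) *\<^sub>v v = (adj_mat M * M) *\<^sub>v v"
    using adj_mat[OF M] by simp
  also have "\<dots> = adj_mat M *\<^sub>v (M *\<^sub>v v)"
    using adj_mat(1)[OF M] M v by simp
  also have "\<dots> = 0\<^sub>v n" unfolding v(2) using adj_mat(1)[OF M]
    by (intro eq_vecI) (auto simp: mult_mat_vec_def scalar_prod_def)
  finally have "((det M \<cdot>\<^sub>m 1\<^sub>m n) *\<^sub>v v) $ i = 0" using one by simp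
  then show ?thesis using v one by simp
qed

lemma poly_char_poly_of_int_mat:
  fixes A :: "int mat" and x :: "'r::comm_ring_1"
  assumes A: "A \<in> carrier_mat n n"
  shows "poly (map_poly of_int (char_poly A)) x
           = det (mat n n (\<lambda>(i,j). (if i = j then x else 0) - of_int (A $$ (i,j))))"
proof -
  define h :: "int poly \<Rightarrow> 'r" where "h = (\<lambda>p. poly (map_poly of_int p) x)"
  interpret h: comm_ring_hom h
    by unfold_locales (simp_all add: h_def of_int_poly_hom.hom_add of_int_poly_hom.hom_mult)
  have "map_mat h (char_poly_matrix A) = mat n n (\<lambda>(i,j). (if i = j then x else 0) - of_int (A $$ (i,j)))"
    using A by (intro eq_matI) (auto simp: char_poly_matrix_def h_def poly_map_of_int_const)
  moreover have "h (char_poly A) = det (map_mat h (char_poly_matrix A))"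
    unfolding char_poly_def by (simp flip: h.hom_det)
  ultimately show ?thesis by (simp add: h_def)
qed

text \<open>The determinant trick: \<open>x\<close> is a root of the characteristic polynomial of the integer
  matrix \<open>c\<close>, since \<open>x I - c\<close> kills the vector \<open>e\<close>, one of whose entries is \<open>1\<close>.\<close>

lemma int_integral_if_int_matrix_action:
  fixes x :: "'r::comm_ring_1" and e :: "nat \<Rightarrow> 'r" and c :: "nat \<Rightarrow> nat \<Rightarrow> int"
  assumes lin: "\<And>i. i < n \<Longrightarrow> x * e i = (\<Sum>j<n. of_int (c i j) * e j)"
    and one: "i0 < n" "e i0 = 1"
  shows "int_integral x"
proof -
  define A :: "int mat" where "A = mat n n (\<lambda>(i,j). c i j)"
  have A: "A \<in> carrier_mat n n" by (simp add: A_def)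
  define M where "M = mat n n (\<lambda>(i,j). (if i = j then x else 0) - of_int (A $$ (i,j)))"
  have "M *\<^sub>v vec n e = 0\<^sub>v n"
  proof (rule eq_vecI)
    fix i assume "i < dim_vec (0\<^sub>v n :: 'r vec)"
    then have i: "i < n" by simp
    have "(M *\<^sub>v vec n e) $ i = (\<Sum>j<n. (if i = j then x * e j else 0) - of_int (c i j) * e j)"
      using i by (auto simp: M_def A_def mult_mat_vec_def scalar_prod_def atLeast0LessThan
          left_diff_distrib intro: sum.cong)
    also have "\<dots> = 0" using i lin[OF i] by (simp add: sum_subtractf sum.delta)
    finally show "(M *\<^sub>v vec n e) $ i = (0\<^sub>v n :: 'r vec) $ i" using i by simp
  qed (simp add: M_def)
  then have "det M = 0"
    using one by (intro det_eq_zero_if_mult_vec_eq_zero[of M n "vec n e" i0]) (auto simp: M_def)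
  then have "poly (map_poly of_int (char_poly A)) x = 0"
    by (simp add: poly_char_poly_of_int_mat[OF A] M_def)
  moreover have "monic (char_poly A)" using degree_monic_char_poly[OF A] by simp
  ultimately show ?thesis unfolding int_integral_def by blast
qed

lemma int_integral_if_stable_span:
  fixes x :: "'r::comm_ring_1"
  assumes W: "finite W" "1 \<in> W" and stable: "\<And>w. w \<in> W \<Longrightarrow> x * w \<in> int_span W"
  shows "int_integral x"
proof -
  define n where "n = card W"
  obtain e where e: "bij_betw e {..<n} W"
    using ex_bij_betw_nat_finite[OF W(1)] by (auto simp: n_def atLeast0LessThan)
  have "\<exists>c. x * e i = (\<Sum>j<n. of_int (c j) * e j)" if i: "i < n" for i
  proof -
    have "e i \<in> W" using e i by (auto simp: bij_betw_def)
    then obtain c where c: "x * e i = (\<Sum>w\<in>W. of_int (c w) * w)"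
      using stable by (auto simp: int_span_def)
    also have "\<dots> = (\<Sum>j<n. of_int (c (e j)) * e j)"
      using sum.reindex_bij_betw[OF e, of "\<lambda>w. of_int (c w) * w"] by simp
    finally show ?thesis by (rule exI[where x="\<lambda>j. c (e j)"])
  qed
  then obtain c where "\<And>i. i < n \<Longrightarrow> x * e i = (\<Sum>j<n. of_int (c i j) * e j)"
    by metis
  moreover obtain i0 where "i0 < n" "e i0 = 1"
    using W(2) bij_betw_imp_surj_on[OF e] by force
  ultimately show ?thesis by (rule int_integral_if_int_matrix_action)
qed

lemma degree_map_poly_of_int_monic:
  "monic P \<Longrightarrow> degree (map_poly (of_int::int \<Rightarrow> 'r::comm_ring_1) P) = degree P"
  by (rule antisym[OF degree_map_poly_le le_degree]) (simp add: coeff_map_poly)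

lemma poly_map_of_int_monic_expand:
  assumes "monic P"
  shows "poly (map_poly of_int P) (x::'r::comm_ring_1) = (\<Sum>i\<le>degree P. of_int (coeff P i) * x ^ i)"
  by (simp add: poly_altdef degree_map_poly_of_int_monic[OF assms] coeff_map_poly)

lemma power_degree_monic_root:
  fixes x :: "'r::comm_ring_1"
  assumes "monic P" "poly (map_poly of_int P) x = 0"
  shows "x ^ degree P = - (\<Sum>i<degree P. of_int (coeff P i) * x ^ i)"
proof -
  have "0 = (\<Sum>i\<le>degree P. of_int (coeff P i) * x ^ i)"
    using assms by (simp add: poly_map_of_int_monic_expand)
  also have "\<dots> = (\<Sum>i<degree P. of_int (coeff P i) * x ^ i) + x ^ degree P"
    using assms(1) by (simp add: lessThan_Suc_atMost[symmetric])
  finally show ?thesis by (simp add: eq_neg_iff_add_eq_0 add.commute)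
qed

lemma degree_pos_monic_root:
  assumes "monic P" "poly (map_poly of_int P) (x::'r::comm_ring_1) = 0"
  shows "degree P > 0"
proof (rule ccontr)
  assume "\<not> degree P > 0"
  then have "P = 1" using assms(1) monic_degree_0 by blast
  then show False using assms(2) by simp
qed

lemma int_span_mult_power:
  fixes x z :: "'r::comm_ring_1"
  assumes P: "monic P" "poly (map_poly of_int P) x = 0" and i: "i < degree P"
    and base: "\<And>k. k < degree P \<Longrightarrow> x ^ k * z \<in> int_span W"
  shows "x * (x ^ i * z) \<in> int_span W"
proof (cases "Suc i < degree P")
  case True
  then show ?thesis using base[OF True] by (simp add: mult.assoc)
next
  case False
  then have "Suc i = degree P" using i by simp
  then have "x * (x ^ i * z) = x ^ degree P * z" by (simp flip: mult.assoc power_Suc)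
  also have "\<dots> = of_int (-1) * (\<Sum>k<degree P. of_int (coeff P k) * (x ^ k * z))"
    by (simp add: power_degree_monic_root[OF P] sum_distrib_right mult.assoc)
  also have "\<dots> \<in> int_span W"
    by (intro int_span_scale int_span_sum base) simp
  finally show ?thesis .
qed

text \<open>For integral \<open>x\<close> and \<open>y\<close>, the monomials \<open>x\<^sup>i y\<^sup>j\<close> below the degrees of their equations span a
  finite set stable under multiplication by both.\<close>

lemma int_integral_common_stable_span:
  fixes x y :: "'r::comm_ring_1"
  assumes "int_integral x" "int_integral y"
  obtains W where "finite W" "1 \<in> W" "\<And>w. w \<in> W \<Longrightarrow> x * w \<in> int_span W"
    "\<And>w. w \<in> W \<Longrightarrow> y * w \<in> int_span W"
proof -
  obtain P where P: "monic P" "poly (map_poly of_int P) x = 0"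
    using assms(1) by (auto simp: int_integral_def)
  obtain Q where Q: "monic Q" "poly (map_poly of_int Q) y = 0"
    using assms(2) by (auto simp: int_integral_def)
  define W where "W = (\<lambda>(i,j). x ^ i * y ^ j) ` ({..<degree P} \<times> {..<degree Q})"
  have fin: "finite W" by (simp add: W_def)
  have base: "x ^ i * y ^ j \<in> int_span W" if "i < degree P" "j < degree Q" for i j
    using that by (intro int_span_base fin) (auto simp: W_def)
  have "x * (x ^ i * y ^ j) \<in> int_span W" if "i < degree P" "j < degree Q" for i j
    using that by (intro int_span_mult_power[OF P] base)
  moreover have "y * (x ^ i * y ^ j) \<in> int_span W" if "i < degree P" "j < degree Q" for i j
    using int_span_mult_power[OF Q that(2), of "x ^ i"] base[OF that(1)]
    by (simp add: mult.commute)
  ultimately have "\<And>w. w \<in> W \<Longrightarrow> x * w \<in> int_span W" "\<And>w. w \<in> W \<Longrightarrow> y * w \<in> int_span W"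
    by (auto simp: W_def)
  moreover have "1 \<in> W"
    using degree_pos_monic_root[OF P] degree_pos_monic_root[OF Q]
    unfolding W_def by (auto intro!: image_eqI[of _ _ "(0,0)"])
  ultimately show ?thesis using that[OF fin] by blast
qed

lemma int_integral_add:
  assumes "int_integral x" "int_integral (y::'r::comm_ring_1)"
  shows "int_integral (x + y)"
proof -
  obtain W where W: "finite W" "1 \<in> W" "\<And>w. w \<in> W \<Longrightarrow> x * w \<in> int_span W"
    "\<And>w. w \<in> W \<Longrightarrow> y * w \<in> int_span W"
    using int_integral_common_stable_span[OF assms] by metis
  show ?thesis
  proof (rule int_integral_if_stable_span[OF W(1,2)])
    fix w assume "w \<in> W"
    then show "(x + y) * w \<in> int_span W" by (simp add: distrib_right int_span_add W(3,4))
  qed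
qed

lemma int_integral_mult:
  assumes "int_integral x" "int_integral (y::'r::comm_ring_1)"
  shows "int_integral (x * y)"
proof -
  obtain W where W: "finite W" "1 \<in> W" "\<And>w. w \<in> W \<Longrightarrow> x * w \<in> int_span W"
    "\<And>w. w \<in> W \<Longrightarrow> y * w \<in> int_span W"
    using int_integral_common_stable_span[OF assms] by metis
  show ?thesis
  proof (rule int_integral_if_stable_span[OF W(1,2)])
    fix w assume "w \<in> W"
    then show "x * y * w \<in> int_span W" by (simp add: mult.assoc int_span_mult[OF W(3)] W(4))
  qed
qed

lemma int_integral_of_int: "int_integral (of_int k :: 'r::comm_ring_1)"
proof -
  have "map_poly (of_int :: int \<Rightarrow> 'r) [:- k, 1:] = [:- of_int k, 1:]"
    by (rule poly_eqI) (simp add: coeff_map_poly coeff_pCons split: nat.split)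
  then show ?thesis unfolding int_integral_def by (intro exI[of _ "[:-k, 1:]"]) simp
qed

lemma int_integral_sum: "(\<And>i. i \<in> I \<Longrightarrow> int_integral (f i)) \<Longrightarrow> int_integral (sum f I :: 'r::comm_ring_1)"
proof (induction I rule: infinite_finite_induct)
  case (insert i I)
  then show ?case by (simp add: int_integral_add)
qed (use int_integral_of_int[of 0] in simp_all)

lemma int_integral_imp_algebraic_int: "int_integral (c::complex) \<Longrightarrow> algebraic_int c"
proof -
  assume "int_integral c"
  then obtain P where P: "monic P" "poly (map_poly of_int P) c = 0"
    by (auto simp: int_integral_def)
  have "lead_coeff (map_poly (of_int::int \<Rightarrow> complex) P) = 1"
    using P(1) by (simp add: degree_map_poly_of_int_monic coeff_map_poly)
  moreover have "\<forall>i. coeff (map_poly (of_int::int \<Rightarrow> complex) P) i \<in> \<int>"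
    by (simp add: coeff_map_poly)
  ultimately show ?thesis using P(2) by (intro algebraic_int.intros) auto
qed

section \<open>The trace of an integral element of \<open>\<rat>[G]\<close>\<close>

lemma coeff_prod_monic_linear:
  fixes a :: "nat \<Rightarrow> 'a::comm_ring_1"
  shows "coeff (\<Prod>i<n. [:- a i, 1:]) n = 1 \<and> degree (\<Prod>i<n. [:- a i, 1:]) \<le> n \<and>
    coeff (\<Prod>i<n. [:- a i, 1:]) (n - 1) = (if n = 0 then 1 else - (\<Sum>i<n. a i))"
proof (induction n)
  case 0 then show ?case by simp
next
  case (Suc n)
  define Q where "Q = (\<Prod>i<n. [:- a i, 1:])"
  have IH: "coeff Q n = 1" "degree Q \<le> n" "coeff Q (n - 1) = (if n = 0 then 1 else - (\<Sum>i<n. a i))"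
    using Suc by (auto simp: Q_def)
  have P: "(\<Prod>i<Suc n. [:- a i, 1:]) = Q * [:- a n, 1:]" by (simp add: Q_def)
  have cf: "coeff (Q * [:- a n, 1:]) k = - a n * coeff Q k + (if k = 0 then 0 else coeff Q (k - 1))" for k
    by (simp add: mult_pCons_right coeff_pCons split: nat.split)
  have "coeff Q (Suc n) = 0" using IH(2) by (simp add: coeff_eq_0)
  then have "coeff (Q * [:- a n, 1:]) (Suc n) = 1" by (simp add: cf IH(1))
  moreover have "coeff (Q * [:- a n, 1:]) n = - (\<Sum>i<Suc n. a i)"
  proof (cases n)
    case 0 then show ?thesis by (simp only: cf) (use IH in simp)
  next
    case (Suc m) then show ?thesis by (simp only: cf) (use IH in simp)
  qed
  moreover have "degree (Q * [:- a n, 1:]) \<le> Suc n"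
    using degree_mult_le[of Q "[:- a n, 1:]"] IH(2) by simp
  ultimately show ?case unfolding P by simp
qed

lemma coeff_prod_list_monic_linear:
  fixes as :: "'a::comm_ring_1 list"
  assumes "as \<noteq> []"
  shows "coeff (\<Prod>a\<leftarrow>as. [:- a, 1:]) (length as - 1) = - sum_list as"
proof -
  have "(\<Prod>a\<leftarrow>as. [:- a, 1:]) = (\<Prod>i<length as. [:- (as ! i), 1:])"
    by (simp add: prod.list_conv_set_nth atLeast0LessThan)
  moreover have "sum_list as = (\<Sum>i<length as. as ! i)"
    by (simp add: sum_list_sum_nth atLeast0LessThan)
  ultimately show ?thesis using coeff_prod_monic_linear[of "\<lambda>i. as ! i" "length as"] assms by simp
qed

text \<open>A permutation other than the identity moves at least two indices, and only the diagonal
  entries of \<open>X I - A\<close> have positive degree.\<close>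

lemma degree_char_poly_matrix_permutation_term:
  fixes A :: "'a::comm_ring_1 mat"
  assumes A: "A \<in> carrier_mat n n" and p: "p permutes {0..<n}" "p \<noteq> id"
  shows "degree (\<Prod>i = 0..<n. char_poly_matrix A $$ (i, p i)) < n - 1"
proof -
  obtain i0 where i0: "i0 < n" "p i0 \<noteq> i0"
    using p by (metis atLeastLessThan_iff order_refl permutes_natset_le)
  have pi0: "p i0 < n" "p (p i0) \<noteq> p i0"
    using p i0 by (auto simp: permutes_in_image dest: permutes_inj injD)
  have entry: "degree (char_poly_matrix A $$ (i, p i)) \<le> (if p i = i then 1 else 0)" if "i < n" for i
    using that A p(1) by (auto simp: char_poly_matrix_def permutes_in_image)
  have "degree (\<Prod>i = 0..<n. char_poly_matrix A $$ (i, p i))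
      \<le> (\<Sum>i = 0..<n. degree (char_poly_matrix A $$ (i, p i)))"
    using degree_prod_sum_le[of "{0..<n}" "\<lambda>i. char_poly_matrix A $$ (i, p i)"] by (simp add: o_def)
  also have "\<dots> \<le> (\<Sum>i = 0..<n. (if p i = i then 1 else 0))"
    by (rule sum_mono) (use entry in auto)
  also have "\<dots> = (\<Sum>i\<in>{0..<n} - {i0, p i0}. (if p i = i then 1 else 0))"
    using i0 pi0 by (intro sum.mono_neutral_right) auto
  also have "\<dots> \<le> (\<Sum>i\<in>{0..<n} - {i0, p i0}. 1)"
    by (rule sum_mono) auto
  also have "\<dots> = n - 2" using i0 pi0 by (simp add: card_Diff_subset)
  finally show ?thesis using i0 pi0 by linarith
qed

lemma coeff_char_poly_trace:
  fixes A :: "'a::comm_ring_1 mat"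
  assumes A: "A \<in> carrier_mat n n" and n: "n > 0"
  shows "coeff (char_poly A) (n - 1) = - (\<Sum>i<n. A $$ (i,i))"
proof -
  define T where "T = (\<lambda>p. signof p * (\<Prod>i = 0..<n. char_poly_matrix A $$ (i, p i)) :: 'a poly)"
  define PS where "PS = {p. p permutes {0..<n}}"
  have "coeff (char_poly A) (n - 1) = (\<Sum>p\<in>PS. coeff (T p) (n - 1))"
    unfolding char_poly_def det_def'[OF char_poly_matrix_closed[OF A]] T_def PS_def coeff_sum ..
  also have "\<dots> = coeff (T id) (n - 1)"
  proof (rule sum.mono_neutral_left[symmetric, where S="{id}", simplified])
    show "finite PS" "id \<in> PS" by (auto simp: PS_def finite_permutations permutes_id)
    show "\<forall>p\<in>PS - {id}. coeff (T p) (n - 1) = 0"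
    proof
      fix p assume "p \<in> PS - {id}"
      then have "degree (\<Prod>i = 0..<n. char_poly_matrix A $$ (i, p i)) < n - 1"
        by (intro degree_char_poly_matrix_permutation_term[OF A]) (auto simp: PS_def)
      then show "coeff (T p) (n - 1) = 0"
        unfolding T_def by (intro coeff_eq_0 order.strict_trans1[OF degree_mult_le]) simp
    qed
  qed
  also have "T id = (\<Prod>i<n. [:- A $$ (i,i), 1:])"
    using A by (simp add: T_def char_poly_matrix_def atLeast0LessThan signof_id)
  also have "coeff \<dots> (n - 1) = - (\<Sum>i<n. A $$ (i,i))"
    using coeff_prod_monic_linear[of "\<lambda>i. A $$ (i,i)" n] n by simp
  finally show ?thesis .
qed

text \<open>The matrix of multiplication by \<open>X\<close> in the basis of group elements enumerated by \<open>e\<close>.\<close>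

definition regular_mat :: "(nat \<Rightarrow> 'g::{finite,ab_group_add}) \<Rightarrow> nat \<Rightarrow> 'g group_alg \<Rightarrow> complex mat" where
  "regular_mat e N X = mat N N (\<lambda>(i,j). of_rat (fun_of X (e i - e j)))"

lemma regular_mat_carrier: "regular_mat e N X \<in> carrier_mat N N"
  by (simp add: regular_mat_def)

lemma regular_mat_mult:
  assumes e: "bij_betw e {0..<N} (UNIV::'g::{finite,ab_group_add} set)"
  shows "regular_mat e N (X * Y) = regular_mat e N X * regular_mat e N Y"
proof (rule eq_matI)
  fix i j assume "i < dim_row (regular_mat e N X * regular_mat e N Y)"
    "j < dim_col (regular_mat e N X * regular_mat e N Y)"
  then have ij: "i < N" "j < N" by (auto simp: regular_mat_def)
  have "(regular_mat e N X * regular_mat e N Y) $$ (i,j)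
      = (\<Sum>k = 0..<N. of_rat (fun_of X (e i - e k)) * of_rat (fun_of Y (e k - e j)))"
    using ij by (simp add: regular_mat_def scalar_prod_def)
  also have "\<dots> = (\<Sum>h\<in>UNIV. of_rat (fun_of X (e i - h)) * of_rat (fun_of Y (h - e j)))"
    using sum.reindex_bij_betw[OF e, of "\<lambda>h. of_rat (fun_of X (e i - h)) * of_rat (fun_of Y (h - e j)) :: complex"]
    by simp
  also have "\<dots> = of_rat (\<Sum>h\<in>UNIV. fun_of X (e i - h) * fun_of Y (h - e j))"
    by (simp add: of_rat_sum of_rat_mult)
  also have "(\<Sum>h\<in>UNIV. fun_of X (e i - h) * fun_of Y (h - e j))
      = (\<Sum>z\<in>UNIV. fun_of X z * fun_of Y (e i - e j - z))"
    by (rule sum.reindex_bij_witness[where i="\<lambda>z. e i - z" and j="\<lambda>h. e i - h"]) (auto simp: algebra_simps)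
  also have "\<dots> = fun_of (X * Y) (e i - e j)" by (simp add: fun_of_mult gconv_def)
  finally show "regular_mat e N (X * Y) $$ (i,j) = (regular_mat e N X * regular_mat e N Y) $$ (i,j)"
    using ij by (simp add: regular_mat_def)
qed (auto simp: regular_mat_def)

lemma regular_mat_one:
  assumes e: "bij_betw e {0..<N} (UNIV::'g::{finite,ab_group_add} set)"
  shows "regular_mat e N (1::'g group_alg) = 1\<^sub>m N"
proof (rule eq_matI)
  fix i j assume "i < dim_row (1\<^sub>m N :: complex mat)" "j < dim_col (1\<^sub>m N :: complex mat)"
  then have ij: "i < N" "j < N" by auto
  have "e i = e j \<longleftrightarrow> i = j" using e ij by (auto simp: bij_betw_def inj_on_def)
  then show "regular_mat e N 1 $$ (i,j) = 1\<^sub>m N $$ (i,j)"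
    using ij by (simp add: regular_mat_def fun_of_one gone_def)
qed (auto simp: regular_mat_def)

lemma regular_mat_power:
  assumes e: "bij_betw e {0..<N} (UNIV::'g::{finite,ab_group_add} set)"
  shows "regular_mat e N (X ^ k) = regular_mat e N X ^\<^sub>m k"
proof (induction k)
  case 0
  show ?case unfolding power_0 regular_mat_one[OF e] by (simp add: regular_mat_def)
next
  case (Suc k)
  have "regular_mat e N (X ^ Suc k) = regular_mat e N (X ^ k) * regular_mat e N X"
    by (simp only: power_Suc2 regular_mat_mult[OF e])
  then show ?case using Suc by simp
qed

text \<open>The regular representation is \<open>\<int>\<close>-linear, so an eigenvalue of \<open>regular_mat e N X\<close> is a root
  of every integer polynomial that annihilates \<open>X\<close>; it is read off at a nonzero entry \<open>r\<close> of the
  eigenvector.\<close>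

lemma poly_eigenvalue_regular_mat:
  assumes e: "bij_betw e {0..<N} (UNIV::'g::{finite,ab_group_add} set)"
    and P: "monic P" "poly (map_poly of_int P) (X::'g group_alg) = 0"
    and ev: "eigenvalue (regular_mat e N X) lam"
  shows "poly (map_poly of_int P) lam = 0"
proof -
  obtain v where v: "eigenvector (regular_mat e N X) v lam"
    using ev by (auto simp: eigenvalue_def)
  have vc: "v \<in> carrier_vec N" and "v \<noteq> 0\<^sub>v N"
    using v by (auto simp: eigenvector_def regular_mat_def)
  then obtain r where r: "r < N" "v $ r \<noteq> 0"
    by (metis eq_vecI carrier_vecD index_zero_vec(1) index_zero_vec(2))
  define ev where "ev Y = (\<Sum>j<N. of_rat (fun_of Y (e r - e j)) * v $ j)" for Y
  have ev_regular: "ev Y = (regular_mat e N Y *\<^sub>v v) $ r" for Y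
    using vc r by (simp add: ev_def regular_mat_def mult_mat_vec_def scalar_prod_def atLeast0LessThan)
  have ev_sum: "ev (sum f I) = (\<Sum>i\<in>I. ev (f i))" for f :: "nat \<Rightarrow> 'g group_alg" and I
    by (induction I rule: infinite_finite_induct)
       (simp_all add: ev_def fun_of_zero fun_of_add of_rat_add distrib_right sum.distrib)
  have ev_scale: "ev (of_int k * Y) = of_int k * ev Y" for k Y
    by (simp add: ev_def fun_of_of_int_mult of_rat_mult sum_distrib_left mult.assoc)
  have ev_power: "ev (X ^ k) = lam ^ k * v $ r" for k
    using eigenvector_pow[OF regular_mat_carrier v] vc r
    by (simp add: ev_regular regular_mat_power[OF e])
  have "0 = ev (poly (map_poly of_int P) X)" using P(2) by (simp add: ev_def fun_of_zero)
  also have "\<dots> = poly (map_poly of_int P) lam * v $ r"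
    by (simp add: poly_map_of_int_monic_expand[OF P(1)] ev_sum ev_scale ev_power
        sum_distrib_right mult.assoc)
  finally show ?thesis using r(2) by simp
qed

lemma algebraic_int_trace_if_eigenvalues:
  fixes A :: "complex mat"
  assumes A: "A \<in> carrier_mat n n" and n: "n > 0"
    and ev: "\<And>a. eigenvalue A a \<Longrightarrow> int_integral a"
  shows "algebraic_int (\<Sum>i<n. A $$ (i,i))"
proof -
  obtain as where as: "char_poly A = (\<Prod>a\<leftarrow>as. [:- a, 1:])" "length as = n"
    using char_poly_factorized[OF A] by blast
  have "int_integral a" if a: "a \<in> set as" for a
  proof (rule ev)
    have "poly (char_poly A) a = 0" unfolding as(1) using a
      by (induction as) (auto simp: poly_prod_list)
    then show "eigenvalue A a" using eigenvalue_root_char_poly[OF A] by simp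
  qed
  then have "algebraic_int (sum_list as)"
    unfolding sum_list_sum_nth by (intro int_integral_imp_algebraic_int int_integral_sum) auto
  moreover have "- sum_list as = - (\<Sum>i<n. A $$ (i,i))"
    using coeff_prod_list_monic_linear[of as] coeff_char_poly_trace[OF A n] as n by auto
  ultimately show ?thesis by simp
qed

text \<open>\<open>|G| X(0)\<close> is the trace of \<open>regular_mat e N X\<close>: rational, and an algebraic integer.\<close>

lemma int_integral_card_mult_coeff_zero:
  assumes X: "int_integral (X::'g::{finite,ab_group_add} group_alg)"
  shows "of_nat (card (UNIV :: 'g set)) * fun_of X 0 \<in> \<int>"
proof -
  define N where "N = card (UNIV :: 'g set)"
  have N: "N > 0" unfolding N_def by (simp add: finite_UNIV_card_ge_0)
  obtain e where e: "bij_betw e {0..<N} (UNIV::'g set)"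
    using ex_bij_betw_nat_finite[of "UNIV::'g set"] by (auto simp: N_def)
  obtain P where P: "monic P" "poly (map_poly of_int P) X = 0"
    using X by (auto simp: int_integral_def)
  have "algebraic_int (\<Sum>i<N. regular_mat e N X $$ (i,i))"
    using poly_eigenvalue_regular_mat[OF e P] P(1)
    by (intro algebraic_int_trace_if_eigenvalues[OF regular_mat_carrier N])
       (auto simp: int_integral_def)
  moreover have "(\<Sum>i<N. regular_mat e N X $$ (i,i)) = of_rat (of_nat N * fun_of X 0)"
    by (simp add: regular_mat_def of_rat_mult)
  ultimately have "of_rat (of_nat N * fun_of X 0) \<in> (\<int> :: complex set)"
    using rational_algebraic_int_is_int Rats_of_rat by metis
  then obtain k where "of_rat (of_nat N * fun_of X 0) = (of_int k :: complex)"
    by (auto elim: Ints_cases)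
  then have "of_nat N * fun_of X 0 = of_int k"
    by (metis of_rat_of_int_eq of_rat_eq_iff)
  then show ?thesis by (simp add: N_def)
qed

section \<open>The integral closure of \<open>\<int>[G]\<close> and its conductor\<close>

abbreviation group_ring_closure :: "('g::{finite,ab_group_add} \<Rightarrow> rat) set" where
  "group_ring_closure \<equiv> integral_closure int_group_ring"

abbreviation group_ring_conductor :: "('g::{finite,ab_group_add} \<Rightarrow> rat) set" where
  "group_ring_conductor \<equiv> conductor group_ring_closure int_group_ring"

lemma int_group_ring_gconv:
  "f \<in> int_group_ring \<Longrightarrow> g \<in> int_group_ring \<Longrightarrow> gconv f g \<in> int_group_ring"
  by (auto simp: int_group_ring_def gconv_def intro!: Ints_sum Ints_mult)

lemma gdelta_in_int_group_ring: "gdelta h \<in> int_group_ring"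
  by (auto simp: int_group_ring_def gdelta_def)

lemma of_int_gone_in_int_group_ring: "(\<lambda>g. of_int k * gone g) \<in> int_group_ring"
  by (auto simp: int_group_ring_def gone_def)

lemma alg_of_int_group_ring_expand:
  assumes "(r::'g::{finite,ab_group_add} \<Rightarrow> rat) \<in> int_group_ring"
  shows "alg_of r = (\<Sum>h\<in>UNIV. of_int \<lfloor>r h\<rfloor> * alg_of (gdelta h))"
proof (rule alg_of_eqI, rule ext)
  fix y
  have "fun_of (\<Sum>h\<in>UNIV. of_int \<lfloor>r h\<rfloor> * alg_of (gdelta h)) y = (\<Sum>h\<in>UNIV. of_int \<lfloor>r h\<rfloor> * gdelta h y)"
    by (simp add: fun_of_sum fun_of_of_int_mult sum_fun_apply)
  also have "\<dots> = of_int \<lfloor>r y\<rfloor>"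
    by (simp add: gdelta_def if_distrib sum.delta' cong: if_cong)
  also have "\<dots> = r y" using assms by (auto simp: int_group_ring_def)
  finally show "fun_of (\<Sum>h\<in>UNIV. of_int \<lfloor>r h\<rfloor> * alg_of (gdelta h)) y = r y" .
qed

lemma alg_of_int_group_ring_mult_in_int_span:
  assumes "(r::'g::{finite,ab_group_add} \<Rightarrow> rat) \<in> int_group_ring"
    and "\<And>g. alg_of (gdelta g) * Y \<in> int_span W"
  shows "alg_of r * Y \<in> int_span W"
proof -
  have "alg_of r * Y = (\<Sum>g\<in>UNIV. of_int \<lfloor>r g\<rfloor> * (alg_of (gdelta g) * Y))"
    by (simp add: alg_of_int_group_ring_expand[OF assms(1)] sum_distrib_right mult.assoc)
  also have "\<dots> \<in> int_span W" by (intro int_span_sum int_span_scale assms(2))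
  finally show ?thesis .
qed

lemma integral_over_int_group_ring_equation:
  assumes "integral_over int_group_ring (x::'g::{finite,ab_group_add} \<Rightarrow> rat)"
  obtains n c where "n > 0" "\<And>i. i < n \<Longrightarrow> c i \<in> int_group_ring"
    "alg_of x ^ n = - (\<Sum>i<n. alg_of (c i) * alg_of x ^ i)"
proof -
  obtain n c where c: "\<forall>i<n. c i \<in> int_group_ring"
    and eq: "gpow x n + (\<Sum>i<n. gconv (c i) (gpow x i)) = 0"
    using assms by (auto simp: integral_over_def)
  have "fun_of (alg_of x ^ n + (\<Sum>i<n. alg_of (c i) * alg_of x ^ i)) = fun_of 0"
    using eq by (simp add: fun_of_add fun_of_power fun_of_sum fun_of_mult fun_of_zero)
  then have "alg_of x ^ n = - (\<Sum>i<n. alg_of (c i) * alg_of x ^ i)"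
    by (simp add: fun_of_inject eq_neg_iff_add_eq_0)
  moreover have "n > 0"
    using eq gone_neq_zero by (cases n) auto
  ultimately show ?thesis using c that by blast
qed

text \<open>An equation of degree \<open>n\<close> over \<open>\<int>[G]\<close> makes the finite set \<open>{g X\<^sup>i | g \<in> G, i < n}\<close> stable
  under \<open>X\<close>.\<close>

lemma int_integral_if_integral_over:
  assumes "integral_over int_group_ring (x::'g::{finite,ab_group_add} \<Rightarrow> rat)"
  shows "int_integral (alg_of x)"
proof -
  define X where "X = alg_of x"
  obtain n c where n: "n > 0" and c: "\<And>i. i < n \<Longrightarrow> c i \<in> int_group_ring"
    and Xn: "X ^ n = - (\<Sum>i<n. alg_of (c i) * X ^ i)"
    using integral_over_int_group_ring_equation[OF assms] unfolding X_def by metis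
  define D where "D h = (alg_of (gdelta h) :: 'g group_alg)" for h
  define W where "W = (\<lambda>(h,i). D h * X ^ i) ` (UNIV \<times> {..<n})"
  have fin: "finite W" by (simp add: W_def)
  have base: "D h * X ^ i \<in> int_span W" if "i < n" for h i
    using that by (intro int_span_base fin) (auto simp: W_def)
  have "D 0 = 1"
    unfolding D_def gdelta_zero by (rule alg_of_eqI) (simp add: fun_of_one)
  then have one: "1 \<in> W" using n unfolding W_def by (auto intro!: image_eqI[of _ _ "(0,0)"])
  have "X * (D h * X ^ i) \<in> int_span W" if i: "i < n" for h i
  proof (cases "Suc i < n")
    case True then show ?thesis using base[OF True] by (simp add: algebra_simps)
  next
    case False
    then have "Suc i = n" using i by simp
    then have "X * (D h * X ^ i) = D h * X ^ n" by (auto simp: algebra_simps)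
    also have "\<dots> = of_int (-1) * (\<Sum>k<n. alg_of (gconv (gdelta h) (c k)) * X ^ k)"
      by (simp add: Xn D_def alg_of_gconv sum_distrib_left algebra_simps sum_negf)
    also have "\<dots> \<in> int_span W"
    proof (intro int_span_scale int_span_sum)
      fix k assume k: "k \<in> {..<n}"
      then have "gconv (gdelta h) (c k) \<in> int_group_ring"
        using c by (auto intro: int_group_ring_gconv gdelta_in_int_group_ring)
      then show "alg_of (gconv (gdelta h) (c k)) * X ^ k \<in> int_span W"
        by (rule alg_of_int_group_ring_mult_in_int_span) (use base k in \<open>simp add: D_def\<close>)
    qed
    finally show ?thesis .
  qed
  then have "\<And>w. w \<in> W \<Longrightarrow> X * w \<in> int_span W" by (auto simp: W_def)
  then show ?thesis unfolding X_def[symmetric] by (rule int_integral_if_stable_span[OF fin one])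
qed

lemma integral_over_if_int_integral:
  assumes "int_integral (alg_of (x::'g::{finite,ab_group_add} \<Rightarrow> rat))"
  shows "integral_over int_group_ring x"
proof -
  obtain P where P: "monic P" "poly (map_poly of_int P) (alg_of x) = 0"
    using assms by (auto simp: int_integral_def)
  define c where "c i = fun_of (of_int (coeff P i) :: 'g group_alg)" for i
  have "alg_of x ^ degree P + (\<Sum>i<degree P. of_int (coeff P i) * alg_of x ^ i) = 0"
    using power_degree_monic_root[OF P] by simp
  then have "fun_of (alg_of x ^ degree P + (\<Sum>i<degree P. of_int (coeff P i) * alg_of x ^ i)) = fun_of 0"
    by simp
  then have "gpow x (degree P) + (\<Sum>i<degree P. gconv (c i) (gpow x i)) = 0"
    by (simp add: fun_of_add fun_of_power fun_of_sum fun_of_mult fun_of_zero c_def)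
  moreover have "\<forall>i<degree P. c i \<in> int_group_ring"
    by (simp add: c_def fun_of_of_int of_int_gone_in_int_group_ring)
  ultimately show ?thesis unfolding integral_over_def by blast
qed

lemma group_ring_closure_iff: "x \<in> group_ring_closure \<longleftrightarrow> int_integral (alg_of x)"
  unfolding integral_closure_def
  using int_integral_if_integral_over integral_over_if_int_integral by blast

lemma group_ring_closure_add:
  "x \<in> group_ring_closure \<Longrightarrow> y \<in> group_ring_closure \<Longrightarrow> x + y \<in> group_ring_closure"
  by (simp add: group_ring_closure_iff alg_of_add int_integral_add)

lemma group_ring_closure_gconv:
  "x \<in> group_ring_closure \<Longrightarrow> y \<in> group_ring_closure \<Longrightarrow> gconv x y \<in> group_ring_closure"
  by (simp add: group_ring_closure_iff alg_of_gconv int_integral_mult)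

lemma int_group_ring_subset_closure: "int_group_ring \<subseteq> group_ring_closure"
proof
  fix r :: "'g::{finite,ab_group_add} \<Rightarrow> rat"
  assume r: "r \<in> int_group_ring"
  have "gpow r 1 + (\<Sum>i<1. gconv (- r) (gpow r i)) = 0"
    by (simp add: gconv_gone_right)
  moreover have "- r \<in> int_group_ring" using r by (auto simp: int_group_ring_def)
  ultimately have "integral_over int_group_ring r"
    unfolding integral_over_def by (intro exI[of _ 1] exI[of _ "\<lambda>i. - r"]) simp
  then show "r \<in> group_ring_closure" by (simp add: integral_closure_def)
qed

lemma group_ring_closure_zero: "0 \<in> group_ring_closure"
  using int_group_ring_subset_closure by (auto simp: int_group_ring_def)

lemma group_ring_closure_sum:
  "(\<And>i. i \<in> I \<Longrightarrow> g i \<in> group_ring_closure) \<Longrightarrow> sum g I \<in> group_ring_closure"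
  by (induction I rule: infinite_finite_induct)
     (auto intro: group_ring_closure_add group_ring_closure_zero)

lemma group_ring_closure_scale:
  assumes "x \<in> group_ring_closure"
  shows "(\<lambda>y. of_int k * x y) \<in> group_ring_closure"
  using group_ring_closure_gconv[OF subsetD[OF int_group_ring_subset_closure
      of_int_gone_in_int_group_ring] assms]
  by (simp add: gconv_scale_gone)

lemma card_scale_closure_in_int_group_ring:
  assumes x: "(x::'g::{finite,ab_group_add} \<Rightarrow> rat) \<in> group_ring_closure"
  shows "(\<lambda>y. of_nat (card (UNIV::'g set)) * x y) \<in> int_group_ring"
proof -
  have "of_nat (card (UNIV::'g set)) * x g \<in> \<int>" for g
  proof -
    have "gconv (gdelta (- g)) x \<in> group_ring_closure"
      using subsetD[OF int_group_ring_subset_closure gdelta_in_int_group_ring]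
      by (rule group_ring_closure_gconv[OF _ x])
    then have "of_nat (card (UNIV::'g set)) * fun_of (alg_of (gconv (gdelta (- g)) x)) 0 \<in> \<int>"
      unfolding group_ring_closure_iff by (rule int_integral_card_mult_coeff_zero)
    then show ?thesis by (simp add: gconv_gdelta_left)
  qed
  then show ?thesis by (simp add: int_group_ring_def)
qed

lemma card_sq_scale_in_conductor:
  assumes x: "(x::'g::{finite,ab_group_add} \<Rightarrow> rat) \<in> group_ring_closure"
  shows "(\<lambda>y. of_nat (card (UNIV::'g set) ^ 2) * x y) \<in> group_ring_conductor"
proof -
  define N where "N = card (UNIV::'g set)"
  have "gconv (\<lambda>y. of_nat (N ^ 2) * x y) t \<in> int_group_ring" if t: "t \<in> group_ring_closure" for t
  proof -
    have "gconv (\<lambda>y. of_nat N * x y) (\<lambda>y. of_nat N * t y) \<in> int_group_ring"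
      using card_scale_closure_in_int_group_ring[OF x] card_scale_closure_in_int_group_ring[OF t]
      by (intro int_group_ring_gconv) (simp_all add: N_def)
    then show ?thesis
      by (simp add: gconv_scale_left gconv_scale_right power2_eq_square mult.assoc)
  qed
  moreover have "(\<lambda>y. of_nat (N ^ 2) * x y) \<in> group_ring_closure"
    using group_ring_closure_scale[OF x, of "int (N ^ 2)"] by simp
  ultimately show ?thesis unfolding conductor_def N_def by simp
qed

section \<open>Tensor products of subgroups\<close>

lemma tensor_sub_zero: "0 \<in> tensor_sub A B"
  unfolding tensor_sub_def by (rule CollectI, rule exI[of _ 0]) auto

lemma tensor_sub_gtens: "f \<in> A \<Longrightarrow> h \<in> B \<Longrightarrow> gtens f h \<in> tensor_sub A B"
  unfolding tensor_sub_def
  by (rule CollectI, rule exI[of _ 1], rule exI[of _ "\<lambda>i. 1"], rule exI[of _ "\<lambda>i. f"],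
      rule exI[of _ "\<lambda>i. h"]) auto

lemma sum_lessThan_add: "(\<Sum>i<m + (n::nat). g i) = (\<Sum>i<m. g i) + (\<Sum>i<n. g (m + i))"
  by (induction n) (auto simp: add.assoc)

lemma tensor_sub_add:
  assumes "x \<in> tensor_sub A B" "y \<in> tensor_sub A B"
  shows "x + y \<in> tensor_sub A B"
proof -
  obtain n1 k1 f1 h1 where 1: "x = (\<Sum>i<(n1::nat). (\<lambda>p. of_int (k1 i) * gtens (f1 i) (h1 i) p))"
    "\<forall>i<n1. f1 i \<in> A \<and> h1 i \<in> B"
    using assms(1) unfolding tensor_sub_def by blast
  obtain n2 k2 f2 h2 where 2: "y = (\<Sum>i<(n2::nat). (\<lambda>p. of_int (k2 i) * gtens (f2 i) (h2 i) p))"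
    "\<forall>i<n2. f2 i \<in> A \<and> h2 i \<in> B"
    using assms(2) unfolding tensor_sub_def by blast
  define k where "k i = (if i < n1 then k1 i else k2 (i - n1))" for i
  define f where "f i = (if i < n1 then f1 i else f2 (i - n1))" for i
  define h where "h i = (if i < n1 then h1 i else h2 (i - n1))" for i
  have "x + y = (\<Sum>i<n1 + n2. (\<lambda>p. of_int (k i) * gtens (f i) (h i) p))"
    unfolding sum_lessThan_add 1 2 k_def f_def h_def by simp
  moreover have "\<forall>i<n1 + n2. f i \<in> A \<and> h i \<in> B"
    using 1(2) 2(2) by (auto simp: f_def h_def)
  ultimately show ?thesis unfolding tensor_sub_def by blast
qed

lemma tensor_sub_scale:
  assumes "x \<in> tensor_sub A B"
  shows "(\<lambda>p. of_int c * x p) \<in> tensor_sub A B"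
proof -
  obtain n k f h where 1: "x = (\<Sum>i<(n::nat). (\<lambda>p. of_int (k i) * gtens (f i) (h i) p))"
    "\<forall>i<n. f i \<in> A \<and> h i \<in> B"
    using assms unfolding tensor_sub_def by blast
  have "(\<lambda>p. of_int c * x p) = (\<Sum>i<n. (\<lambda>p. of_int (c * k i) * gtens (f i) (h i) p))"
    unfolding 1 by (rule ext) (simp add: sum_fun_apply sum_distrib_left mult.assoc)
  then show ?thesis using 1(2) unfolding tensor_sub_def
    by (intro CollectI exI[of _ n] exI[of _ "\<lambda>i. c * k i"] exI[of _ f] exI[of _ h]) simp
qed

lemma tensor_sub_sum: "(\<And>i. i \<in> I \<Longrightarrow> g i \<in> tensor_sub A B) \<Longrightarrow> sum g I \<in> tensor_sub A B"
  by (induction I rule: infinite_finite_induct) (auto intro: tensor_sub_add tensor_sub_zero)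

lemma tensor_sub_mono: "A \<subseteq> A' \<Longrightarrow> B \<subseteq> B' \<Longrightarrow> tensor_sub A B \<subseteq> tensor_sub A' B'"
  unfolding tensor_sub_def by blast

lemma tensor_sub_coprime_multiples:
  assumes "(\<lambda>p. of_nat m * x p) \<in> tensor_sub A B" "(\<lambda>p. of_nat n * x p) \<in> tensor_sub A B"
    and "coprime m n"
  shows "x \<in> tensor_sub A B"
proof -
  obtain u v where uv: "u * int m + v * int n = 1"
    using bezout_int[of "int m" "int n"] assms(3) by (auto simp: coprime_iff_gcd_eq_1 gcd_int_int_eq)
  have uv_rat: "(of_int u * of_nat m + of_int v * of_nat n :: rat) = 1"
    using arg_cong[OF uv, of "of_int :: int \<Rightarrow> rat"] by simp
  have "x = (\<lambda>p. of_int u * (of_nat m * x p)) + (\<lambda>p. of_int v * (of_nat n * x p))"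
  proof
    fix p
    have "x p = (of_int u * of_nat m + of_int v * of_nat n) * x p" by (simp add: uv_rat)
    then show "x p = ((\<lambda>p. of_int u * (of_nat m * x p)) + (\<lambda>p. of_int v * (of_nat n * x p))) p"
      by (simp add: algebra_simps)
  qed
  also have "\<dots> \<in> tensor_sub A B"
    by (rule tensor_sub_add[OF tensor_sub_scale[OF assms(1)] tensor_sub_scale[OF assms(2)]])
  finally show ?thesis .
qed

lemma tensor_sub_comp_swap:
  assumes "x \<in> tensor_sub A B"
  shows "x \<circ> prod.swap \<in> tensor_sub B A"
proof -
  obtain n k f h where 1: "x = (\<Sum>i<(n::nat). (\<lambda>p. of_int (k i) * gtens (f i) (h i) p))"
    "\<forall>i<n. f i \<in> A \<and> h i \<in> B"
    using assms unfolding tensor_sub_def by blast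
  have "x \<circ> prod.swap = (\<Sum>i<n. (\<lambda>p. of_int (k i) * gtens (h i) (f i) p))"
    unfolding 1 by (simp add: fun_eq_iff sum_fun_apply gtens_def mult.commute)
  then show ?thesis using 1(2) unfolding tensor_sub_def
    by (intro CollectI exI[of _ n] exI[of _ k] exI[of _ h] exI[of _ f]) simp
qed

lemma int_tensor_sub_Ints:
  assumes "x \<in> tensor_sub (int_group_ring::('a::{finite,ab_group_add} \<Rightarrow> rat) set)
                          (int_group_ring::('b::{finite,ab_group_add} \<Rightarrow> rat) set)"
  shows "x p \<in> \<int>"
proof -
  obtain n k f h where 1: "x = (\<Sum>i<(n::nat). (\<lambda>p. of_int (k i) * gtens (f i) (h i) p))"
    "\<forall>i<n. f i \<in> int_group_ring \<and> h i \<in> int_group_ring"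
    using assms unfolding tensor_sub_def by blast
  show ?thesis unfolding 1 sum_fun_apply
    using 1(2) by (intro Ints_sum) (auto simp: gtens_def int_group_ring_def split: prod.split)
qed

section \<open>The conductor of \<open>S\<^sub>1 \<otimes> S\<^sub>2\<close> into \<open>R\<^sub>1 \<otimes> R\<^sub>2\<close>\<close>

lemma tensor_sub_conductor_subset:
  fixes S1 R1 :: "('a::{finite,ab_group_add} \<Rightarrow> rat) set"
    and S2 R2 :: "('b::{finite,ab_group_add} \<Rightarrow> rat) set"
  shows "tensor_sub (conductor S1 R1) (conductor S2 R2) \<subseteq> conductor (tensor_sub S1 S2) (tensor_sub R1 R2)"
proof
  fix x assume x: "x \<in> tensor_sub (conductor S1 R1) (conductor S2 R2)"
  then have "x \<in> tensor_sub S1 S2"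
    using tensor_sub_mono[of "conductor S1 R1" S1 "conductor S2 R2" S2] by (auto simp: conductor_def)
  moreover obtain n k f h where 1: "x = (\<Sum>i<(n::nat). (\<lambda>p. of_int (k i) * gtens (f i) (h i) p))"
    "\<forall>i<n. f i \<in> conductor S1 R1 \<and> h i \<in> conductor S2 R2"
    using x unfolding tensor_sub_def by blast
  have "gconv x t \<in> tensor_sub R1 R2" if t: "t \<in> tensor_sub S1 S2" for t
  proof -
    obtain m l u v where 2: "t = (\<Sum>j<(m::nat). (\<lambda>p. of_int (l j) * gtens (u j) (v j) p))"
      "\<forall>j<m. u j \<in> S1 \<and> v j \<in> S2"
      using t unfolding tensor_sub_def by blast
    have "gconv x t = (\<Sum>i<n. \<Sum>j<m. (\<lambda>p. of_int (k i * l j) * gtens (gconv (f i) (u j)) (gconv (h i) (v j)) p))"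
      unfolding 1(1) 2(1) gconv_sum_left gconv_sum_right gconv_scale_left gconv_scale_right gconv_gtens
      by (rule ext) (simp add: sum_fun_apply sum_distrib_left algebra_simps, rule sum.swap)
    also have "\<dots> \<in> tensor_sub R1 R2"
      using 1(2) 2(2) by (intro tensor_sub_sum tensor_sub_scale tensor_sub_gtens) (auto simp: conductor_def)
    finally show ?thesis .
  qed
  ultimately show "x \<in> conductor (tensor_sub S1 S2) (tensor_sub R1 R2)"
    unfolding conductor_def by blast
qed

lemma conductor_tensor_comp_swap:
  fixes x :: "'a::{finite,ab_group_add} \<times> 'b::{finite,ab_group_add} \<Rightarrow> rat"
  assumes x: "x \<in> conductor (tensor_sub A B) (tensor_sub C D)"
  shows "x \<circ> prod.swap \<in> conductor (tensor_sub B A) (tensor_sub D C)"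
proof -
  have "gconv (x \<circ> prod.swap) t \<in> tensor_sub D C" if t: "t \<in> tensor_sub B A" for t
  proof -
    have "gconv x (t \<circ> prod.swap) \<in> tensor_sub C D"
      using x tensor_sub_comp_swap[OF t] by (auto simp: conductor_def)
    then have "gconv x (t \<circ> prod.swap) \<circ> prod.swap \<in> tensor_sub D C"
      by (rule tensor_sub_comp_swap)
    then show ?thesis
      by (simp add: gconv_comp_swap[symmetric] comp_assoc)
  qed
  then show ?thesis
    using x tensor_sub_comp_swap by (auto simp: conductor_def)
qed

lemma gconv_gtens_gone_apply:
  fixes x :: "'a::{finite,ab_group_add} \<times> 'b::{finite,ab_group_add} \<Rightarrow> rat"
  shows "gconv x (gtens gone t) (g, b) = gconv (\<lambda>b. x (g, b)) t b"
proof -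
  have "gconv x (gtens gone t) (g, b)
      = (\<Sum>y1\<in>UNIV. \<Sum>y2\<in>UNIV. x (y1, y2) * (gone (g - y1) * t (b - y2)))"
    by (simp add: gconv_def sum_UNIV_pair gtens_def)
  also have "\<dots> = (\<Sum>y1\<in>UNIV. if y1 = g then (\<Sum>y2\<in>UNIV. x (y1, y2) * t (b - y2)) else 0)"
    by (rule sum.cong) (auto simp: gone_def)
  also have "\<dots> = gconv (\<lambda>b. x (g, b)) t b" by (simp add: sum.delta' gconv_def)
  finally show ?thesis .
qed

text \<open>The slices \<open>x(g, -)\<close> of an element of \<open>S\<^sub>1 \<otimes> S\<^sub>2\<close> are \<open>\<rat>\<close>-combinations of elements of
  \<open>S\<^sub>2\<close> whose coefficients become integers after multiplication by \<open>|G\<^sub>1|\<close>.\<close>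

lemma card_scale_slice_in_closure:
  fixes x :: "'a::{finite,ab_group_add} \<times> 'b::{finite,ab_group_add} \<Rightarrow> rat"
  assumes "x \<in> tensor_sub group_ring_closure group_ring_closure"
  shows "(\<lambda>b. of_nat (card (UNIV::'a set)) * x (g, b)) \<in> group_ring_closure"
proof -
  define N where "N = card (UNIV::'a set)"
  obtain n k f h where 1: "x = (\<Sum>i<(n::nat). (\<lambda>p. of_int (k i) * gtens (f i) (h i) p))"
    "\<forall>i<n. f i \<in> group_ring_closure \<and> h i \<in> group_ring_closure"
    using assms unfolding tensor_sub_def by blast
  have int: "of_nat N * f i g = of_int \<lfloor>of_nat N * f i g\<rfloor>" if "i < n" for i
    using card_scale_closure_in_int_group_ring[of "f i"] 1(2) that
    by (simp add: N_def int_group_ring_def)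
  have "(\<lambda>b. of_nat N * x (g, b)) = (\<Sum>i<n. (\<lambda>b. of_int (k i * \<lfloor>of_nat N * f i g\<rfloor>) * h i b))"
  proof
    fix b
    have "of_nat N * x (g, b) = (\<Sum>i<n. of_int (k i) * (of_nat N * f i g) * h i b)"
      by (simp add: 1(1) sum_fun_apply gtens_def sum_distrib_left algebra_simps)
    also have "\<dots> = (\<Sum>i<n. of_int (k i * \<lfloor>of_nat N * f i g\<rfloor>) * h i b)"
      by (rule sum.cong) (use int in auto)
    finally show "of_nat N * x (g, b) = (\<Sum>i<n. (\<lambda>b. of_int (k i * \<lfloor>of_nat N * f i g\<rfloor>) * h i b)) b"
      by (simp add: sum_fun_apply)
  qed
  also have "\<dots> \<in> group_ring_closure"
    using 1(2) by (intro group_ring_closure_sum group_ring_closure_scale) auto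
  finally show ?thesis by (simp add: N_def)
qed

lemma card_scale_slice_in_conductor:
  fixes x :: "'a::{finite,ab_group_add} \<times> 'b::{finite,ab_group_add} \<Rightarrow> rat"
  assumes x: "x \<in> conductor (tensor_sub group_ring_closure group_ring_closure)
                             (tensor_sub int_group_ring int_group_ring)"
  shows "(\<lambda>b. of_nat (card (UNIV::'a set)) * x (g, b)) \<in> group_ring_conductor"
proof -
  have "gconv (\<lambda>b. x (g, b)) t b \<in> \<int>" if t: "t \<in> group_ring_closure" for t b
  proof -
    have "gtens gone t \<in> tensor_sub (group_ring_closure :: ('a \<Rightarrow> rat) set) group_ring_closure"
      using tensor_sub_gtens[OF _ t] int_group_ring_subset_closure of_int_gone_in_int_group_ring[of 1]
      by auto
    then have "gconv x (gtens gone t) \<in> tensor_sub int_group_ring int_group_ring"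
      using x by (auto simp: conductor_def)
    then show ?thesis
      using int_tensor_sub_Ints by (fastforce simp: gconv_gtens_gone_apply[symmetric])
  qed
  then have "gconv (\<lambda>b. of_nat (card (UNIV::'a set)) * x (g, b)) t \<in> int_group_ring"
    if "t \<in> group_ring_closure" for t
    using that by (simp add: gconv_scale_left int_group_ring_def)
  moreover have "(\<lambda>b. of_nat (card (UNIV::'a set)) * x (g, b)) \<in> group_ring_closure"
    using x by (intro card_scale_slice_in_closure) (simp add: conductor_def)
  ultimately show ?thesis by (simp add: conductor_def)
qed

lemma conductor_tensor_card_cube_left:
  fixes x :: "'a::{finite,ab_group_add} \<times> 'b::{finite,ab_group_add} \<Rightarrow> rat"
  assumes x: "x \<in> conductor (tensor_sub group_ring_closure group_ring_closure)
                             (tensor_sub int_group_ring int_group_ring)"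
  shows "(\<lambda>p. of_nat (card (UNIV::'a set) ^ 3) * x p)
           \<in> tensor_sub group_ring_conductor group_ring_conductor"
proof -
  define N where "N = card (UNIV::'a set)"
  have "(\<lambda>p. of_nat (N ^ 3) * x p)
      = (\<Sum>g\<in>UNIV. gtens (\<lambda>y. of_nat (N ^ 2) * gdelta g y) (\<lambda>b. of_nat N * x (g, b)))"
  proof (rule ext, clarify)
    fix a b
    have "(\<Sum>g\<in>UNIV. gtens (\<lambda>y. of_nat (N ^ 2) * gdelta g y) (\<lambda>b. of_nat N * x (g, b))) (a, b)
        = (\<Sum>g\<in>UNIV. if g = a then of_nat (N ^ 2) * (of_nat N * x (g, b)) else 0)"
      unfolding sum_fun_apply by (rule sum.cong) (auto simp: gtens_def gdelta_def)
    also have "\<dots> = of_nat (N ^ 3) * x (a, b)"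
      by (simp add: sum.delta' power_numeral_reduce)
    finally show "of_nat (N ^ 3) * x (a, b)
        = (\<Sum>g\<in>UNIV. gtens (\<lambda>y. of_nat (N ^ 2) * gdelta g y) (\<lambda>b. of_nat N * x (g, b))) (a, b)" ..
  qed
  also have "\<dots> \<in> tensor_sub group_ring_conductor group_ring_conductor"
    using card_sq_scale_in_conductor[OF subsetD[OF int_group_ring_subset_closure gdelta_in_int_group_ring]]
      card_scale_slice_in_conductor[OF x]
    by (intro tensor_sub_sum tensor_sub_gtens) (simp_all add: N_def)
  finally show ?thesis by (simp add: N_def)
qed

lemma conductor_tensor_card_cube_right:
  fixes x :: "'a::{finite,ab_group_add} \<times> 'b::{finite,ab_group_add} \<Rightarrow> rat"
  assumes x: "x \<in> conductor (tensor_sub group_ring_closure group_ring_closure)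
                             (tensor_sub int_group_ring int_group_ring)"
  shows "(\<lambda>p. of_nat (card (UNIV::'b set) ^ 3) * x p)
           \<in> tensor_sub group_ring_conductor group_ring_conductor"
proof -
  have "(\<lambda>p. of_nat (card (UNIV::'b set) ^ 3) * (x \<circ> prod.swap) p) \<circ> prod.swap
          \<in> tensor_sub group_ring_conductor group_ring_conductor"
    by (rule tensor_sub_comp_swap[OF conductor_tensor_card_cube_left[OF conductor_tensor_comp_swap[OF x]]])
  then show ?thesis by (simp add: comp_def)
qed

lemma conductor_tensor_subset_tensor_conductor:
  assumes "coprime (card (UNIV :: 'a::{finite,ab_group_add} set)) (card (UNIV :: 'b::{finite,ab_group_add} set))"
  shows "conductor (tensor_sub group_ring_closure group_ring_closure) (tensor_sub int_group_ring int_group_ring)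
           \<subseteq> tensor_sub (group_ring_conductor :: ('a \<Rightarrow> rat) set) (group_ring_conductor :: ('b \<Rightarrow> rat) set)"
proof
  fix x :: "'a \<times> 'b \<Rightarrow> rat"
  assume x: "x \<in> conductor (tensor_sub group_ring_closure group_ring_closure)
                            (tensor_sub int_group_ring int_group_ring)"
  show "x \<in> tensor_sub group_ring_conductor group_ring_conductor"
    using assms
    by (intro tensor_sub_coprime_multiples[OF conductor_tensor_card_cube_left[OF x]
          conductor_tensor_card_cube_right[OF x]]) simp
qed

theorem mainTheorem12:
  fixes p q e f :: nat
  assumes "prime p" and "prime q" and "p \<noteq> q"
    and "card (UNIV :: ('a::{finite,ab_group_add}) set) = p ^ e"
    and "card (UNIV :: ('b::{finite,ab_group_add}) set) = q ^ f"
  shows "conductor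
           (tensor_sub (integral_closure (int_group_ring :: ('a \<Rightarrow> rat) set))
                       (integral_closure (int_group_ring :: ('b \<Rightarrow> rat) set)))
           (tensor_sub (int_group_ring :: ('a \<Rightarrow> rat) set) (int_group_ring :: ('b \<Rightarrow> rat) set))
       = tensor_sub
           (conductor (integral_closure (int_group_ring :: ('a \<Rightarrow> rat) set)) int_group_ring)
           (conductor (integral_closure (int_group_ring :: ('b \<Rightarrow> rat) set)) int_group_ring)"
proof (rule equalityI[OF conductor_tensor_subset_tensor_conductor tensor_sub_conductor_subset])
  show "coprime (card (UNIV :: 'a set)) (card (UNIV :: 'b set))"
    using primes_coprime[OF assms(1-3)] by (simp add: assms(4,5))
qed

end
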